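(* Let $1\le p<\infty$ and $\eta\in(0,1)$. There exist $\beta\in(1/2,1)$ and $C_1>0$, depending only on $\eta$, such that for every $\varepsilon>0$, every $f\in\mathcal{H}(\mathbb{D})$ and every $\xi\in\mathbb{T}$, setting $$\mathcal{A}=\Big\{\alpha\in\mathbb{D}:\ |f(\alpha)|^p<\frac{\varepsilon}{m(\Delta_\eta(\alpha))}\int_{\Delta_\eta(\alpha)}|f(z)|^p\,dm(z)\Big\},$$ we have $$\int_{\mathcal{A}\cap\Gamma_{1/2}(\xi)}|f(z)|^p\frac{dm(z)}{1-|z|}\ \le\ \varepsilon\, C_1\int_{\Gamma_\beta(\xi)}|f(z)|^p\frac{dm(z)}{1-|z|}.$$
   Context: $\mathbb{D}$ is the unit disc, $\mathbb{T}$ the unit circle, $dm$ normalized area measure, $\mathcal{H}(\mathbb{D})$ the analytic functions on $\mathbb{D}$. For $\beta\in(0,1)$ and $\xi\in\mathbb{T}$, $\Gamma_\beta(\xi)=\{z\in\mathbb{D}:|z|<\beta\}\cup\bigcup_{|z|<\beta}[z,\xi)$, where $[z,\xi)$ is the half-open segment from $z$ to $\xi$. For $\alpha\in\mathbb{D}$, $\Delta_\eta(\alpha)=\{z\in\mathbb{D}:|z-\alpha|<\eta(1-|\alpha|)\}$. *)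

theory Defs
  imports "HOL-Complex_Analysis.Complex_Analysis"
begin

text \<open>Normalized area measure on the complex plane: Lebesgue measure divided by pi,
  so that the unit disc has measure 1.\<close>
definition area_m :: "complex measure" where
  "area_m = density lborel (\<lambda>_. ennreal (1 / pi))"

definition Gamma_reg :: "real \<Rightarrow> complex \<Rightarrow> complex set" where
  "Gamma_reg \<beta> \<xi> = {z. norm z < \<beta>} \<union> (\<Union>z\<in>{z. norm z < \<beta>}. closed_segment z \<xi> - {\<xi>})"

definition Delta_reg :: "real \<Rightarrow> complex \<Rightarrow> complex set" where
  "Delta_reg \<eta> \<alpha> = {z. norm (z - \<alpha>) < \<eta> * (1 - norm \<alpha>)}"

end

theory Submission
  imports Defs
begin

text \<open>
  \<open>\<Gamma>\<^sub>1\<^sub>/\<^sub>2(\<xi>)\<close> lies in the Stolz angle of aperture 3; the discs \<open>\<Delta>\<^sub>\<eta>(\<alpha>)\<close> centred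
  there lie in the Stolz angle of aperture \<open>K = (3 + \<eta>)/(1 - \<eta>)\<close>, which in turn lies in
  \<open>\<Gamma>\<^sub>\<beta>(\<xi>)\<close> for \<open>\<beta> = 1 - 1/(4K\<^sup>2)\<close>.
  For \<open>\<alpha> \<in> \<A>\<close>, \<open>|f(\<alpha>)|\<^sup>p/(1 - |\<alpha>|)\<close> is at most \<open>\<epsilon>\<close> times the average of \<open>|f|\<^sup>p\<close>
  over \<open>\<Delta>\<^sub>\<eta>(\<alpha>)\<close>, divided by \<open>1 - |\<alpha>|\<close>. Integrating in \<open>\<alpha>\<close> and exchanging the order of
  integration, a point \<open>z\<close> is counted only by the \<open>\<alpha>\<close> with \<open>z \<in> \<Delta>\<^sub>\<eta>(\<alpha>)\<close>; these lie
  in a disc of radius \<open>\<lesssim> 1 - |z|\<close> and satisfy \<open>1 - |\<alpha>| \<approx> 1 - |z|\<close>, so together they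
  contribute \<open>\<lesssim> |f(z)|\<^sup>p/(1 - |z|)\<close>.
\<close>

definition stolz_angle :: "real \<Rightarrow> complex \<Rightarrow> complex set" where
  "stolz_angle K \<xi> = {z. norm z < 1 \<and> norm (\<xi> - z) \<le> K * (1 - norm z)}"

lemma Gamma_reg_subset_stolz_angle:
  assumes "0 \<le> \<beta>" "\<beta> < 1" "norm \<xi> = 1"
  shows "Gamma_reg \<beta> \<xi> \<subseteq> stolz_angle ((1 + \<beta>) / (1 - \<beta>)) \<xi>"
proof
  fix \<alpha> assume "\<alpha> \<in> Gamma_reg \<beta> \<xi>"
  \<comment> \<open>a point of the disc of radius \<beta> is the endpoint t = 0 of its own segment\<close>
  then obtain w t where w: "norm w < \<beta>" and t: "0 \<le> t" "t < 1" and \<alpha>: "\<alpha> = (1 - t) *\<^sub>R w + t *\<^sub>R \<xi>"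
  proof (cases "norm \<alpha> < \<beta>")
    case True
    then show ?thesis using that[of \<alpha> 0] by simp
  next
    case False
    with \<open>\<alpha> \<in> Gamma_reg \<beta> \<xi>\<close> obtain w where w: "norm w < \<beta>" "\<alpha> \<in> closed_segment w \<xi>" "\<alpha> \<noteq> \<xi>"
      unfolding Gamma_reg_def by auto
    then obtain t where t: "0 \<le> t" "t \<le> 1" "\<alpha> = (1 - t) *\<^sub>R w + t *\<^sub>R \<xi>"
      unfolding closed_segment_def by auto
    with w(3) have "t \<noteq> 1" by auto
    with w t show ?thesis using that[of w t] by simp
  qed
  have "\<xi> - \<alpha> = (1 - t) *\<^sub>R (\<xi> - w)"
    by (simp add: \<alpha> algebra_simps)
  then have "norm (\<xi> - \<alpha>) = (1 - t) * norm (\<xi> - w)"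
    using t by simp
  also have "\<dots> \<le> (1 - t) * (1 + \<beta>)"
    using t w assms norm_triangle_ineq4[of \<xi> w] by (intro mult_left_mono) auto
  finally have dist: "norm (\<xi> - \<alpha>) \<le> (1 - t) * (1 + \<beta>)" .
  have "norm \<alpha> \<le> (1 - t) * norm w + t"
    using t assms norm_triangle_ineq[of "(1 - t) *\<^sub>R w" "t *\<^sub>R \<xi>"] by (simp add: \<alpha>)
  also have "\<dots> < (1 - t) * \<beta> + t"
    using t w by simp
  finally have gap: "(1 - t) * (1 - \<beta>) < 1 - norm \<alpha>"
    by (simp add: algebra_simps)
  have "0 \<le> (1 - t) * (1 - \<beta>)"
    using t assms by simp
  with gap have "norm \<alpha> < 1"
    by linarith
  have "(1 + \<beta>) * ((1 - t) * (1 - \<beta>)) \<le> (1 + \<beta>) * (1 - norm \<alpha>)"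
    using gap assms by (intro mult_left_mono) auto
  then have "(1 - t) * (1 + \<beta>) \<le> (1 + \<beta>) / (1 - \<beta>) * (1 - norm \<alpha>)"
    using assms by (simp add: field_simps)
  with dist \<open>norm \<alpha> < 1\<close> show "\<alpha> \<in> stolz_angle ((1 + \<beta>) / (1 - \<beta>)) \<xi>"
    unfolding stolz_angle_def by simp
qed

lemma Gamma_reg_subset_ball:
  assumes "0 \<le> \<beta>" "\<beta> < 1" "norm \<xi> = 1"
  shows "Gamma_reg \<beta> \<xi> \<subseteq> ball 0 1"
  using Gamma_reg_subset_stolz_angle[OF assms] by (auto simp: stolz_angle_def)

lemma one_minus_inverse_four_square_bounds:
  fixes K :: real
  assumes "1 \<le> K"
  shows "1/2 < 1 - 1 / (4 * K^2)" "1 - 1 / (4 * K^2) < 1"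
proof -
  have "1 \<le> K^2" using assms by (simp add: one_le_power)
  then have "0 < 1 / (4 * K^2)" "1 / (4 * K^2) \<le> 1 / 4"
    by (auto simp: divide_le_eq_1)
  then show "1/2 < 1 - 1 / (4 * K^2)" "1 - 1 / (4 * K^2) < 1"
    by linarith+
qed

lemma norm_extend_chord_sq:
  fixes z \<xi> :: complex
  assumes "norm \<xi> = 1"
  shows "norm (z + l *\<^sub>R (z - \<xi>))^2
           = norm z^2 - l * (1 - norm z^2) + l * (1 + l) * norm (\<xi> - z)^2"
proof -
  have "Im \<xi> * Im \<xi> + Re \<xi> * Re \<xi> = 1"
    using assms by (metis cmod_power2 power_one power2_eq_square add.commute)
  then show ?thesis
    unfolding cmod_power2 by (simp add: algebra_simps power2_eq_square) (metis distrib_left mult.right_neutral)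
qed

lemma stolz_angle_subset_Gamma_reg:
  assumes "1 \<le> K" "norm \<xi> = 1"
  shows "stolz_angle K \<xi> \<subseteq> Gamma_reg (1 - 1 / (4 * K^2)) \<xi>"
proof
  fix z assume "z \<in> stolz_angle K \<xi>"
  then have z: "norm z < 1" and st: "norm (\<xi> - z) \<le> K * (1 - norm z)"
    by (auto simp: stolz_angle_def)
  define \<mu> where "\<mu> = 1 / K^2"
  have \<mu>: "0 < \<mu>" "\<mu> \<le> 1" using assms by (auto simp: \<mu>_def)
  have \<beta>: "1 - 1 / (4 * K^2) = 1 - \<mu> / 4" by (simp add: \<mu>_def)
  show "z \<in> Gamma_reg (1 - 1 / (4 * K^2)) \<xi>"
  proof (cases "norm z < 3/4")
    case True
    then show ?thesis unfolding Gamma_reg_def \<beta> using \<mu> by auto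
  next
    case False
    define \<delta> where "\<delta> = 1 - norm z"
    have \<delta>: "0 < \<delta>" "\<delta> \<le> 1/4" using z False by (auto simp: \<delta>_def)
    \<comment> \<open>extend the chord from \<xi> through z beyond z by the factor l; the endpoint w lands in the disc\<close>
    define l where "l = \<mu> / \<delta>"
    have l: "0 < l" using \<delta> \<mu> by (simp add: l_def)
    define w where "w = z + l *\<^sub>R (z - \<xi>)"
    have "norm (\<xi> - z)^2 \<le> (K * \<delta>)^2"
      using st by (intro power_mono) (auto simp: \<delta>_def)
    then have "norm w^2 \<le> norm z^2 - l * (1 - norm z^2) + l * (1 + l) * (K^2 * \<delta>^2)"
      unfolding w_def norm_extend_chord_sq[OF assms(2)] using l
      by (intro add_left_mono mult_left_mono) (auto simp: power_mult_distrib)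
    also have "\<dots> = 1 - (1 - \<delta>) * (\<delta> + \<mu>)"
    proof -
      have "l * (1 + l) * (K^2 * \<delta>^2) = \<delta> + \<mu>"
        using \<delta> assms by (simp add: l_def \<mu>_def field_simps power2_eq_square)
      moreover have "norm z^2 - l * (1 - norm z^2) = (1 - \<delta>)^2 - \<mu> * (2 - \<delta>)"
        using \<delta> by (simp add: l_def \<delta>_def field_simps power2_eq_square)
      ultimately show ?thesis using \<mu> by (simp add: power2_eq_square algebra_simps)
    qed
    also have "\<dots> < (1 - \<mu> / 4)^2"
    proof -
      have "3/4 * \<mu> \<le> (1 - \<delta>) * (\<delta> + \<mu>)" using \<delta> \<mu> by (intro mult_mono) auto
      moreover have "(1 - \<mu> / 4)^2 = 1 - \<mu> / 2 + \<mu>^2 / 16" by (simp add: power2_eq_square algebra_simps)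
      moreover have "0 \<le> \<mu>^2" by simp
      ultimately show ?thesis using \<mu> by linarith
    qed
    finally have "norm w^2 < (1 - \<mu> / 4)^2" .
    then have "norm w < 1 - \<mu> / 4"
      by (rule power_less_imp_less_base) (use \<mu> in simp)
    moreover have "z \<in> closed_segment w \<xi>"
    proof -
      have "z = (1 - l / (1 + l)) *\<^sub>R w + (l / (1 + l)) *\<^sub>R \<xi>"
        using l unfolding w_def
        by (simp add: field_simps scaleR_add_right scaleR_diff_right)
           (simp add: add_divide_distrib[symmetric] flip: scaleR_add_left)
      then show ?thesis
        using l unfolding closed_segment_def by (intro CollectI exI[of _ "l / (1 + l)"]) auto
    qed
    moreover have "z \<noteq> \<xi>" using z assms by auto
    ultimately show ?thesis unfolding Gamma_reg_def \<beta> by auto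
  qed
qed

lemma Delta_reg_eq_ball: "Delta_reg \<eta> \<alpha> = ball \<alpha> (\<eta> * (1 - norm \<alpha>))"
  by (auto simp: Delta_reg_def dist_norm norm_minus_commute)

lemma Delta_reg_distortion:
  assumes "0 < \<eta>" "\<eta> < 1" "norm \<alpha> < 1" "z \<in> Delta_reg \<eta> \<alpha>"
  shows "norm z < 1" "(1 - \<eta>) * (1 - norm \<alpha>) < 1 - norm z" "1 - norm z < (1 + \<eta>) * (1 - norm \<alpha>)"
proof -
  have z: "norm (z - \<alpha>) < \<eta> * (1 - norm \<alpha>)" using assms(4) by (simp add: Delta_reg_def)
  have "norm z \<le> norm \<alpha> + norm (z - \<alpha>)" "norm \<alpha> \<le> norm z + norm (z - \<alpha>)"
    using norm_triangle_ineq[of \<alpha> "z - \<alpha>"] norm_triangle_ineq4[of z "z - \<alpha>"] by auto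
  with z assms show "(1 - \<eta>) * (1 - norm \<alpha>) < 1 - norm z" "1 - norm z < (1 + \<eta>) * (1 - norm \<alpha>)"
    by (simp_all add: algebra_simps)
  moreover have "0 < (1 - \<eta>) * (1 - norm \<alpha>)" using assms by simp
  ultimately show "norm z < 1" by linarith
qed

lemma Delta_reg_stolz_angle:
  assumes "0 < \<eta>" "\<eta> < 1" "\<alpha> \<in> stolz_angle K \<xi>" "z \<in> Delta_reg \<eta> \<alpha>"
  shows "z \<in> stolz_angle ((K + \<eta>) / (1 - \<eta>)) \<xi>"
proof -
  have \<alpha>: "norm \<alpha> < 1" "norm (\<xi> - \<alpha>) \<le> K * (1 - norm \<alpha>)"
    using assms(3) by (auto simp: stolz_angle_def)
  note distortion = Delta_reg_distortion[OF assms(1,2) \<alpha>(1) assms(4)]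
  have "norm (\<xi> - z) \<le> norm (\<xi> - \<alpha>) + norm (z - \<alpha>)"
    using norm_triangle_ineq4[of "\<xi> - \<alpha>" "z - \<alpha>"] by simp
  also have "\<dots> \<le> (K + \<eta>) * (1 - norm \<alpha>)"
    using \<alpha> assms(4) by (simp add: Delta_reg_def algebra_simps)
  also have "\<dots> \<le> (K + \<eta>) / (1 - \<eta>) * (1 - norm z)"
  proof -
    have "0 \<le> K * (1 - norm \<alpha>)" using \<alpha> norm_ge_zero[of "\<xi> - \<alpha>"] by linarith
    then have "0 \<le> K" using \<alpha> by (simp add: zero_le_mult_iff)
    then have "(K + \<eta>) * ((1 - \<eta>) * (1 - norm \<alpha>)) \<le> (K + \<eta>) * (1 - norm z)"
      using distortion(2) assms(1) by (intro mult_left_mono) auto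
    then show ?thesis using assms(1,2) by (simp add: field_simps)
  qed
  finally show ?thesis using distortion(1) by (simp add: stolz_angle_def)
qed

lemma Union_Delta_reg_stolz_angle_subset:
  assumes "0 < \<eta>" "\<eta> < 1" "1 \<le> K" "norm \<xi> = 1"
  shows "(\<Union>\<alpha>\<in>stolz_angle K \<xi>. Delta_reg \<eta> \<alpha>)
           \<subseteq> Gamma_reg (1 - 1 / (4 * ((K + \<eta>) / (1 - \<eta>))^2)) \<xi> \<inter> ball 0 1"
proof -
  have "1 \<le> (K + \<eta>) / (1 - \<eta>)"
    using assms by (simp add: field_simps)
  then have "stolz_angle ((K + \<eta>) / (1 - \<eta>)) \<xi> \<subseteq> Gamma_reg (1 - 1 / (4 * ((K + \<eta>) / (1 - \<eta>))^2)) \<xi>"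
    by (rule stolz_angle_subset_Gamma_reg[OF _ assms(4)])
  moreover have "stolz_angle ((K + \<eta>) / (1 - \<eta>)) \<xi> \<subseteq> ball 0 1"
    by (auto simp: stolz_angle_def)
  moreover have "(\<Union>\<alpha>\<in>stolz_angle K \<xi>. Delta_reg \<eta> \<alpha>) \<subseteq> stolz_angle ((K + \<eta>) / (1 - \<eta>)) \<xi>"
    using Delta_reg_stolz_angle[OF assms(1,2)] by blast
  ultimately show ?thesis by blast
qed

lemma sets_area_m [simp, measurable_cong]: "sets area_m = sets borel"
  by (simp add: area_m_def)

lemma space_area_m [simp]: "space area_m = UNIV"
  by (simp add: area_m_def)

lemma emeasure_area_m_ball:
  assumes "0 \<le> r"
  shows "emeasure area_m (ball c r) = ennreal (r^2)"
proof -
  have "emeasure area_m (ball c r) = ennreal (1 / pi) * emeasure lborel (ball c r)"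
    unfolding area_m_def by (subst emeasure_density) (auto intro: nn_integral_cmult_indicator)
  also have "\<dots> = ennreal (r^2)"
    using assms by (simp add: emeasure_ball unit_ball_vol_2 flip: ennreal_mult)
  finally show ?thesis .
qed

lemma measure_area_m_Delta_reg:
  assumes "0 \<le> \<eta>" "norm \<alpha> \<le> 1"
  shows "measure area_m (Delta_reg \<eta> \<alpha>) = (\<eta> * (1 - norm \<alpha>))^2"
  using emeasure_area_m_ball[of "\<eta> * (1 - norm \<alpha>)" \<alpha>] assms
  by (simp add: Delta_reg_eq_ball measure_def)

interpretation area_m: sigma_finite_measure area_m
  unfolding area_m_def
  by (subst sigma_finite_measure.sigma_finite_iff_density_finite'[OF sigma_finite_lborel]) auto

interpretation area_m_pair: pair_sigma_finite area_m area_m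
  by (simp add: pair_sigma_finite_def area_m.sigma_finite_measure_axioms)

lemma ennreal_integral_le_nn_integral:
  fixes f :: "'a \<Rightarrow> real"
  assumes "\<And>x. 0 \<le> f x"
  shows "ennreal (integral\<^sup>L M f) \<le> (\<integral>\<^sup>+ x. ennreal (f x) \<partial>M)"
proof (cases "integrable M f")
  case True
  then show ?thesis using assms by (simp add: nn_integral_eq_integral)
qed (simp add: not_integrable_integral_eq)

lemma nn_integral_set_cmult_ennreal:
  fixes g :: "'a \<Rightarrow> real"
  assumes "0 \<le> c" "g \<in> borel_measurable M" "U \<in> sets M"
  shows "(\<integral>\<^sup>+ x\<in>U. ennreal (c * g x) \<partial>M) = ennreal c * (\<integral>\<^sup>+ x\<in>U. ennreal (g x) \<partial>M)"
proof -
  note [measurable] = assms(2,3)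
  have "(\<integral>\<^sup>+ x\<in>U. ennreal (c * g x) \<partial>M) = (\<integral>\<^sup>+ x. ennreal c * (ennreal (g x) * indicator U x) \<partial>M)"
    using assms(1) by (intro nn_integral_cong) (simp add: ennreal_mult' mult.assoc)
  also have "\<dots> = ennreal c * (\<integral>\<^sup>+ x\<in>U. ennreal (g x) \<partial>M)"
    by (intro nn_integral_cmult) measurable
  finally show ?thesis .
qed

lemma nn_integral_Delta_reg_kernel_le:
  assumes \<eta>: "0 < \<eta>" "\<eta> < 1" and S: "S \<subseteq> ball 0 1" and "0 \<le> y"
  shows "(\<integral>\<^sup>+ \<alpha>. ennreal (y / (\<eta>^2 * (1 - norm \<alpha>)^3)) * indicator (Delta_reg \<eta> \<alpha>) z * indicator S \<alpha> \<partial>area_m)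
           \<le> ennreal ((1 + \<eta>)^3 / (1 - \<eta>)^2 * (y / (1 - norm z))) * indicator (\<Union>\<alpha>\<in>S. Delta_reg \<eta> \<alpha>) z"
proof (cases "z \<in> (\<Union>\<alpha>\<in>S. Delta_reg \<eta> \<alpha>)")
  case False
  then have "(\<lambda>\<alpha>. ennreal (y / (\<eta>^2 * (1 - norm \<alpha>)^3)) * indicator (Delta_reg \<eta> \<alpha>) z * indicator S \<alpha>)
      = (\<lambda>_. 0)"
    by (auto simp: fun_eq_iff indicator_def)
  then show ?thesis using False by simp
next
  case True
  then obtain \<alpha>\<^sub>0 where "norm \<alpha>\<^sub>0 < 1" "z \<in> Delta_reg \<eta> \<alpha>\<^sub>0" using S by auto
  then have \<delta>: "0 < 1 - norm z" using Delta_reg_distortion(1)[OF \<eta>] by auto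
  \<comment> \<open>every \<alpha> with z \<in> \<Delta>(\<alpha>) lies in a disc about z of radius R and has 1 - |\<alpha>| comparable to 1 - |z|\<close>
  define R where "R = \<eta> * (1 - norm z) / (1 - \<eta>)"
  define c where "c = y * (1 + \<eta>)^3 / (\<eta>^2 * (1 - norm z)^3)"
  have kernel_le: "ennreal (y / (\<eta>^2 * (1 - norm \<alpha>)^3)) * indicator (Delta_reg \<eta> \<alpha>) z * indicator S \<alpha>
      \<le> ennreal c * indicator (ball z R) \<alpha>" for \<alpha>
  proof (cases "\<alpha> \<in> S \<and> z \<in> Delta_reg \<eta> \<alpha>")
    case True
    then have \<alpha>: "norm \<alpha> < 1" using S by auto
    note distortion = Delta_reg_distortion[OF \<eta> \<alpha>, of z]
    have "dist z \<alpha> < \<eta> * (1 - norm \<alpha>)"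
      using True by (simp add: Delta_reg_eq_ball dist_commute)
    also have "\<dots> \<le> R"
    proof -
      have "\<eta> * ((1 - \<eta>) * (1 - norm \<alpha>)) \<le> \<eta> * (1 - norm z)"
        using distortion(2) True \<eta> by (intro mult_left_mono) auto
      then show ?thesis using \<eta> by (simp add: R_def field_simps)
    qed
    finally have "\<alpha> \<in> ball z R" by simp
    have "((1 - norm z) / (1 + \<eta>))^3 \<le> (1 - norm \<alpha>)^3"
      using distortion(3) True \<eta> \<delta> by (intro power_mono) (auto simp: field_simps)
    then have "y / (\<eta>^2 * (1 - norm \<alpha>)^3) \<le> y / (\<eta>^2 * ((1 - norm z) / (1 + \<eta>))^3)"
      using \<eta> \<delta> \<alpha> \<open>0 \<le> y\<close> by (intro divide_left_mono mult_left_mono mult_pos_pos) auto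
    also have "\<dots> = c"
      using \<eta> by (simp add: c_def power_divide field_simps)
    finally show ?thesis using True \<open>\<alpha> \<in> ball z R\<close> by (simp add: ennreal_leI)
  qed (auto simp: indicator_def)
  have "(\<integral>\<^sup>+ \<alpha>. ennreal (y / (\<eta>^2 * (1 - norm \<alpha>)^3)) * indicator (Delta_reg \<eta> \<alpha>) z * indicator S \<alpha> \<partial>area_m)
      \<le> (\<integral>\<^sup>+ \<alpha>. ennreal c * indicator (ball z R) \<alpha> \<partial>area_m)"
    by (intro nn_integral_mono kernel_le)
  also have "\<dots> = ennreal (c * R^2)"
  proof -
    have "0 \<le> c" "0 \<le> R" using \<eta> \<delta> \<open>0 \<le> y\<close> by (auto simp: c_def R_def)
    then show ?thesis by (simp add: nn_integral_cmult_indicator emeasure_area_m_ball ennreal_mult)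
  qed
  also have "c * R^2 = (1 + \<eta>)^3 / (1 - \<eta>)^2 * (y / (1 - norm z))"
    using \<eta> \<delta> unfolding c_def R_def
    by (simp add: power_divide power_mult_distrib divide_simps) (simp add: power2_eq_square power3_eq_cube)
  finally show ?thesis using True by simp
qed

lemma nn_integral_Delta_reg_average_le:
  fixes h :: "complex \<Rightarrow> real"
  assumes \<eta>: "0 < \<eta>" "\<eta> < 1" and S: "S \<in> sets borel" "S \<subseteq> ball 0 1"
    and h: "h \<in> borel_measurable borel" "\<And>z. 0 \<le> h z"
  shows "(\<integral>\<^sup>+ \<alpha>\<in>S. (\<integral>\<^sup>+ z\<in>Delta_reg \<eta> \<alpha>. ennreal (h z / (\<eta>^2 * (1 - norm \<alpha>)^3)) \<partial>area_m) \<partial>area_m)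
           \<le> ennreal ((1 + \<eta>)^3 / (1 - \<eta>)^2) *
             (\<integral>\<^sup>+ z\<in>(\<Union>\<alpha>\<in>S. Delta_reg \<eta> \<alpha>). ennreal (h z / (1 - norm z)) \<partial>area_m)"
proof -
  define k where "k \<alpha> z = ennreal (h z / (\<eta>^2 * (1 - norm \<alpha>)^3)) * indicator (Delta_reg \<eta> \<alpha>) z * indicator S \<alpha>"
    for \<alpha> z
  note [measurable] = S(1)
  have k_measurable: "case_prod k \<in> borel_measurable (area_m \<Otimes>\<^sub>M area_m)"
  proof -
    have "case_prod k \<in> borel_measurable (borel \<Otimes>\<^sub>M borel)"
      unfolding k_def Delta_reg_def indicator_def using h(1) by measurable
    then show ?thesis by (simp cong: measurable_cong_sets sets_pair_measure_cong)
  qed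
  have "(\<integral>\<^sup>+ \<alpha>\<in>S. (\<integral>\<^sup>+ z\<in>Delta_reg \<eta> \<alpha>. ennreal (h z / (\<eta>^2 * (1 - norm \<alpha>)^3)) \<partial>area_m) \<partial>area_m)
      = (\<integral>\<^sup>+ \<alpha>. (\<integral>\<^sup>+ z. k \<alpha> z \<partial>area_m) \<partial>area_m)"
  proof -
    have "(\<lambda>z. ennreal (h z / (\<eta>^2 * (1 - norm \<alpha>)^3)) * indicator (Delta_reg \<eta> \<alpha>) z) \<in> borel_measurable area_m"
      for \<alpha> unfolding Delta_reg_def indicator_def using h(1) by measurable
    then show ?thesis unfolding k_def by (simp add: nn_integral_multc)
  qed
  also have "\<dots> = (\<integral>\<^sup>+ z. (\<integral>\<^sup>+ \<alpha>. k \<alpha> z \<partial>area_m) \<partial>area_m)"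
    using area_m_pair.Fubini'[OF k_measurable] by simp
  also have "\<dots> \<le> (\<integral>\<^sup>+ z. ennreal ((1 + \<eta>)^3 / (1 - \<eta>)^2) *
      (ennreal (h z / (1 - norm z)) * indicator (\<Union>\<alpha>\<in>S. Delta_reg \<eta> \<alpha>) z) \<partial>area_m)"
  proof (intro nn_integral_mono)
    fix z
    have C1_nonneg: "0 \<le> (1 + \<eta>)^3 / (1 - \<eta>)^2" using \<eta> by simp
    have "(\<integral>\<^sup>+ \<alpha>. k \<alpha> z \<partial>area_m)
        \<le> ennreal ((1 + \<eta>)^3 / (1 - \<eta>)^2 * (h z / (1 - norm z))) * indicator (\<Union>\<alpha>\<in>S. Delta_reg \<eta> \<alpha>) z"
      unfolding k_def by (rule nn_integral_Delta_reg_kernel_le[OF \<eta> S(2) h(2)])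
    also have "\<dots> = ennreal ((1 + \<eta>)^3 / (1 - \<eta>)^2) *
      (ennreal (h z / (1 - norm z)) * indicator (\<Union>\<alpha>\<in>S. Delta_reg \<eta> \<alpha>) z)"
      using \<eta> by (simp only: ennreal_mult'[OF C1_nonneg] mult.assoc)
    finally show "(\<integral>\<^sup>+ \<alpha>. k \<alpha> z \<partial>area_m) \<le> \<dots>" .
  qed
  also have "\<dots> = ennreal ((1 + \<eta>)^3 / (1 - \<eta>)^2) *
      (\<integral>\<^sup>+ z\<in>(\<Union>\<alpha>\<in>S. Delta_reg \<eta> \<alpha>). ennreal (h z / (1 - norm z)) \<partial>area_m)"
  proof (intro nn_integral_cmult)
    have [measurable]: "(\<Union>\<alpha>\<in>S. Delta_reg \<eta> \<alpha>) \<in> sets borel"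
      unfolding Delta_reg_eq_ball by (intro borel_open open_UN) auto
    show "(\<lambda>z. ennreal (h z / (1 - norm z)) * indicator (\<Union>\<alpha>\<in>S. Delta_reg \<eta> \<alpha>) z) \<in> borel_measurable area_m"
      using h(1) by measurable
  qed
  finally show ?thesis .
qed

lemma ennreal_le_nn_integral_Delta_reg:
  fixes u :: "complex \<Rightarrow> real"
  assumes "0 < \<eta>" "norm \<alpha> < 1" "0 < \<epsilon>" "\<And>z. 0 \<le> u z"
    and y: "y < \<epsilon> / measure area_m (Delta_reg \<eta> \<alpha>) * (LINT z:Delta_reg \<eta> \<alpha>|area_m. u z)"
  shows "ennreal (y / (1 - norm \<alpha>))
           \<le> (\<integral>\<^sup>+ z\<in>Delta_reg \<eta> \<alpha>. ennreal (\<epsilon> * u z / (\<eta>^2 * (1 - norm \<alpha>)^3)) \<partial>area_m)"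
proof -
  define c where "c = \<epsilon> / (\<eta>^2 * (1 - norm \<alpha>)^3)"
  have "y / (1 - norm \<alpha>) \<le> \<epsilon> / (\<eta> * (1 - norm \<alpha>))^2 * (LINT z:Delta_reg \<eta> \<alpha>|area_m. u z) / (1 - norm \<alpha>)"
    using y assms(1,2) by (intro divide_right_mono) (auto simp: measure_area_m_Delta_reg)
  also have "\<dots> = (LINT z:Delta_reg \<eta> \<alpha>|area_m. c * u z)"
    using assms(1,2) by (simp add: c_def power2_eq_square power3_eq_cube field_simps)
  also have "\<dots> = integral\<^sup>L area_m (\<lambda>z. indicator (Delta_reg \<eta> \<alpha>) z * (c * u z))"
    by (simp add: set_lebesgue_integral_def mult.left_commute)
  finally have "ennreal (y / (1 - norm \<alpha>)) \<le> ennreal (integral\<^sup>L area_m (\<lambda>z. indicator (Delta_reg \<eta> \<alpha>) z * (c * u z)))"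
    by (rule ennreal_leI)
  also have "\<dots> \<le> (\<integral>\<^sup>+ z. ennreal (indicator (Delta_reg \<eta> \<alpha>) z * (c * u z)) \<partial>area_m)"
    using assms by (intro ennreal_integral_le_nn_integral) (simp add: c_def)
  also have "\<dots> = (\<integral>\<^sup>+ z\<in>Delta_reg \<eta> \<alpha>. ennreal (\<epsilon> * u z / (\<eta>^2 * (1 - norm \<alpha>)^3)) \<partial>area_m)"
    by (intro nn_integral_cong) (simp add: c_def indicator_def)
  finally show ?thesis .
qed

lemma nn_integral_small_averages_Gamma_reg_le:
  fixes u :: "complex \<Rightarrow> real"
  assumes \<eta>: "0 < \<eta>" "\<eta> < 1" and "0 < \<epsilon>" and \<xi>: "norm \<xi> = 1"
    and u: "u \<in> borel_measurable borel" "\<And>z. 0 \<le> u z"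
  defines "A \<equiv> {\<alpha>. norm \<alpha> < 1 \<and>
                   u \<alpha> < \<epsilon> / measure area_m (Delta_reg \<eta> \<alpha>) * (LINT z:Delta_reg \<eta> \<alpha>|area_m. u z)}"
    and "K \<equiv> (3 + \<eta>) / (1 - \<eta>)"
  shows "(\<integral>\<^sup>+ z\<in>A \<inter> Gamma_reg (1/2) \<xi>. ennreal (u z / (1 - norm z)) \<partial>area_m)
           \<le> ennreal (\<epsilon> * ((1 + \<eta>)^3 / (1 - \<eta>)^2)) *
             (\<integral>\<^sup>+ z\<in>Gamma_reg (1 - 1 / (4 * K^2)) \<xi>. ennreal (u z / (1 - norm z)) \<partial>area_m)"
proof -
  define C1 where "C1 = (1 + \<eta>)^3 / (1 - \<eta>)^2"
  define S where "S = stolz_angle 3 \<xi>"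
  define U where "U = (\<Union>\<alpha>\<in>S. Delta_reg \<eta> \<alpha>)"
  note [measurable] = u(1)
  have S: "S \<in> sets borel" "S \<subseteq> ball 0 1"
    unfolding S_def stolz_angle_def by measurable auto
  have "Gamma_reg (1/2) \<xi> \<subseteq> S"
    using Gamma_reg_subset_stolz_angle[of "1/2" \<xi>] \<xi> by (simp add: S_def)
  then have "(\<integral>\<^sup>+ z\<in>A \<inter> Gamma_reg (1/2) \<xi>. ennreal (u z / (1 - norm z)) \<partial>area_m)
      \<le> (\<integral>\<^sup>+ \<alpha>\<in>S. (\<integral>\<^sup>+ z\<in>Delta_reg \<eta> \<alpha>. ennreal (\<epsilon> * u z / (\<eta>^2 * (1 - norm \<alpha>)^3)) \<partial>area_m) \<partial>area_m)"
    using ennreal_le_nn_integral_Delta_reg[OF \<eta>(1) _ \<open>0 < \<epsilon>\<close> u(2)]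
    by (intro nn_integral_mono) (auto simp: A_def indicator_def)
  also have "\<dots> \<le> ennreal C1 * (\<integral>\<^sup>+ z\<in>U. ennreal (\<epsilon> * u z / (1 - norm z)) \<partial>area_m)"
    unfolding C1_def U_def using \<open>0 < \<epsilon>\<close> u(2)
    by (intro nn_integral_Delta_reg_average_le[OF \<eta> S]) (auto simp: mult_nonneg_nonneg)
  also have "\<dots> = ennreal C1 * (ennreal \<epsilon> * (\<integral>\<^sup>+ z\<in>U. ennreal (u z / (1 - norm z)) \<partial>area_m))"
  proof -
    have "U \<in> sets borel"
      unfolding U_def Delta_reg_eq_ball by (intro borel_open open_UN) auto
    then show ?thesis
      using nn_integral_set_cmult_ennreal[of \<epsilon> "\<lambda>z. u z / (1 - norm z)" area_m U] \<open>0 < \<epsilon>\<close> by simp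
  qed
  also have "\<dots> \<le> ennreal C1 * (ennreal \<epsilon> *
      (\<integral>\<^sup>+ z\<in>Gamma_reg (1 - 1 / (4 * K^2)) \<xi>. ennreal (u z / (1 - norm z)) \<partial>area_m))"
  proof -
    have "U \<subseteq> Gamma_reg (1 - 1 / (4 * K^2)) \<xi>"
      using Union_Delta_reg_stolz_angle_subset[OF \<eta> _ \<xi>, of 3] by (simp add: U_def S_def K_def)
    then show ?thesis
      by (intro mult_left_mono nn_integral_mono) (auto simp: indicator_def)
  qed
  also have "\<dots> = ennreal (\<epsilon> * C1) *
      (\<integral>\<^sup>+ z\<in>Gamma_reg (1 - 1 / (4 * K^2)) \<xi>. ennreal (u z / (1 - norm z)) \<partial>area_m)"
    using ennreal_mult'[of \<epsilon> C1] \<open>0 < \<epsilon>\<close> by (simp add: mult_ac)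
  finally show ?thesis
    by (simp only: C1_def)
qed

lemma nn_integral_small_values_Gamma_reg_le:
  fixes f :: "complex \<Rightarrow> complex" and p :: real
  assumes \<eta>: "0 < \<eta>" "\<eta> < 1" and "0 < \<epsilon>" and f: "continuous_on (ball 0 1) f" and \<xi>: "norm \<xi> = 1"
  defines "A \<equiv> {\<alpha>. norm \<alpha> < 1 \<and>
                   norm (f \<alpha>) powr p < \<epsilon> / measure area_m (Delta_reg \<eta> \<alpha>) *
                     (LINT z:Delta_reg \<eta> \<alpha>|area_m. norm (f z) powr p)}"
    and "K \<equiv> (3 + \<eta>) / (1 - \<eta>)"
  shows "(\<integral>\<^sup>+ z\<in>A \<inter> Gamma_reg (1/2) \<xi>. ennreal (norm (f z) powr p / (1 - norm z)) \<partial>area_m)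
           \<le> ennreal (\<epsilon> * ((1 + \<eta>)^3 / (1 - \<eta>)^2)) *
             (\<integral>\<^sup>+ z\<in>Gamma_reg (1 - 1 / (4 * K^2)) \<xi>. ennreal (norm (f z) powr p / (1 - norm z)) \<partial>area_m)"
proof -
  \<comment> \<open>f is only defined on the disc; u extends |f|^p by 0 to a Borel function on the plane\<close>
  define u where "u z = norm (indicator (ball 0 1) z *\<^sub>R f z) powr p" for z
  have "(\<lambda>z. indicator (ball 0 1) z *\<^sub>R f z) \<in> borel_measurable borel"
    using f by (intro borel_measurable_continuous_on_indicator) auto
  then have u_measurable: "u \<in> borel_measurable borel"
    unfolding u_def by measurable
  have u_disc: "u z = norm (f z) powr p" if "z \<in> ball 0 1" for z
    using that by (simp add: u_def)
  define B where "B = {\<alpha>. norm \<alpha> < 1 \<and>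
      u \<alpha> < \<epsilon> / measure area_m (Delta_reg \<eta> \<alpha>) * (LINT z:Delta_reg \<eta> \<alpha>|area_m. u z)}"
  have "A \<subseteq> B"
  proof
    fix \<alpha> assume "\<alpha> \<in> A"
    then have \<alpha>: "norm \<alpha> < 1" by (simp add: A_def)
    have "(LINT z:Delta_reg \<eta> \<alpha>|area_m. u z) = (LINT z:Delta_reg \<eta> \<alpha>|area_m. norm (f z) powr p)"
      using Delta_reg_distortion(1)[OF \<eta> \<alpha>] u_disc
      by (intro set_lebesgue_integral_cong) (auto simp: Delta_reg_eq_ball)
    with \<open>\<alpha> \<in> A\<close> show "\<alpha> \<in> B"
      by (simp add: A_def B_def u_disc)
  qed
  have "1 \<le> K" using \<eta> by (simp add: K_def field_simps)
  note \<beta> = one_minus_inverse_four_square_bounds[OF this]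
  have "Gamma_reg (1/2) \<xi> \<subseteq> ball 0 1" "Gamma_reg (1 - 1 / (4 * K^2)) \<xi> \<subseteq> ball 0 1"
    by (intro Gamma_reg_subset_ball[OF _ _ \<xi>]; use \<beta> in linarith)+
  then have "(\<integral>\<^sup>+ z\<in>A \<inter> Gamma_reg (1/2) \<xi>. ennreal (norm (f z) powr p / (1 - norm z)) \<partial>area_m)
      \<le> (\<integral>\<^sup>+ z\<in>B \<inter> Gamma_reg (1/2) \<xi>. ennreal (u z / (1 - norm z)) \<partial>area_m)"
    using \<open>A \<subseteq> B\<close> u_disc by (intro nn_integral_mono) (auto simp: indicator_def)
  also have "\<dots> \<le> ennreal (\<epsilon> * ((1 + \<eta>)^3 / (1 - \<eta>)^2)) *
      (\<integral>\<^sup>+ z\<in>Gamma_reg (1 - 1 / (4 * K^2)) \<xi>. ennreal (u z / (1 - norm z)) \<partial>area_m)"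
    unfolding B_def K_def
    by (rule nn_integral_small_averages_Gamma_reg_le[OF \<eta> \<open>0 < \<epsilon>\<close> \<xi> u_measurable]) (simp add: u_def)
  also have "(\<integral>\<^sup>+ z\<in>Gamma_reg (1 - 1 / (4 * K^2)) \<xi>. ennreal (u z / (1 - norm z)) \<partial>area_m)
      = (\<integral>\<^sup>+ z\<in>Gamma_reg (1 - 1 / (4 * K^2)) \<xi>. ennreal (norm (f z) powr p / (1 - norm z)) \<partial>area_m)"
    using \<open>Gamma_reg (1 - 1 / (4 * K^2)) \<xi> \<subseteq> ball 0 1\<close> u_disc
    by (intro nn_integral_cong) (auto simp: indicator_def)
  finally show ?thesis .
qed

theorem lemma3:
  fixes \<eta> :: real
  assumes "0 < \<eta>" and "\<eta> < 1"
  shows "\<exists>\<beta> C1. 1/2 < \<beta> \<and> \<beta> < 1 \<and> 0 < C1 \<and>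
    (\<forall>(p::real) (\<epsilon>::real) (f::complex \<Rightarrow> complex) (\<xi>::complex).
      1 \<le> p \<longrightarrow> 0 < \<epsilon> \<longrightarrow> f holomorphic_on ball 0 1 \<longrightarrow> norm \<xi> = 1 \<longrightarrow>
      (let A = {\<alpha>. norm \<alpha> < 1 \<and>
                   norm (f \<alpha>) powr p <
                     \<epsilon> / measure area_m (Delta_reg \<eta> \<alpha>) *
                     (LINT z:Delta_reg \<eta> \<alpha>|area_m. norm (f z) powr p)}
       in (\<integral>\<^sup>+ z\<in>A \<inter> Gamma_reg (1/2) \<xi>. ennreal (norm (f z) powr p / (1 - norm z)) \<partial>area_m)
          \<le> ennreal (\<epsilon> * C1) *
            (\<integral>\<^sup>+ z\<in>Gamma_reg \<beta> \<xi>. ennreal (norm (f z) powr p / (1 - norm z)) \<partial>area_m)))"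
proof -
  \<comment> \<open>the hypotheses \<open>1 \<le> p\<close> and holomorphy are stronger than needed: any real \<open>p\<close> and continuity of \<open>f\<close> on the disc suffice\<close>
  define K where "K = (3 + \<eta>) / (1 - \<eta>)"
  have "1 \<le> K"
    using assms by (simp add: K_def field_simps)
  moreover have "0 < (1 + \<eta>)^3 / (1 - \<eta>)^2"
    using assms by simp
  ultimately show ?thesis
    using nn_integral_small_values_Gamma_reg_le[OF assms, folded K_def] one_minus_inverse_four_square_bounds
    by (intro exI[of _ "1 - 1 / (4 * K^2)"] exI[of _ "(1 + \<eta>)^3 / (1 - \<eta>)^2"])
       (auto simp: Let_def holomorphic_on_imp_continuous_on)
qed

end
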